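(* Let $s\ge1$ be a fixed integer, let $K_n,P_n$ be positive integers with $s\le K_n\le P_n$ and $P_n=\Omega(n)$, and let $q_n$ be the edge probability of $G_s(n,K_n,P_n)$, i.e., the probability that two given vertices share at least $s$ items. (a) If there is a sequence $\gamma_n$ with $|\gamma_n|=O(\ln\ln n)$ and $\frac{1}{s!}\cdot\frac{K_n^{2s}}{P_n^{s}}=\frac{\ln n+\gamma_n}{n}$, then $q_n\sim\frac{1}{s!}\cdot\frac{K_n^{2s}}{P_n^{s}}$ and $\big|q_n-\frac{1}{s!}\cdot\frac{K_n^{2s}}{P_n^{s}}\big|=o\big(\frac1n\big)$. (b) If there is a sequence $\gamma_n$ with $|\gamma_n|=O(\ln\ln n)$ and $q_n=\frac{\ln n+\gamma_n}{n}$, then $q_n\sim\frac{1}{s!}\cdot\frac{K_n^{2s}}{P_n^{s}}$ and $\big|q_n-\frac{1}{s!}\cdot\frac{K_n^{2s}}{P_n^{s}}\big|=o\big(\frac1n\big)$.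
   Context: The uniform random $s$-intersection graph $G_s(n,K_n,P_n)$ has $n$ vertices; each vertex independently selects a set of $K_n$ distinct items uniformly at random from a pool of $P_n$ distinct items, and two vertices are adjacent iff their item sets share at least $s$ items. $f_n\sim g_n$ means $f_n/g_n\to1$ as $n\to\infty$. *)

theory Defs
  imports Complex_Main "HOL-Library.Landau_Symbols"
begin

text \<open>Edge probability of the uniform random s-intersection graph G_s(n,K,P):
  the probability that two vertices, each independently choosing a uniformly random
  K-subset of the item pool {0..<P}, share at least s items.\<close>
definition edge_prob :: "nat \<Rightarrow> nat \<Rightarrow> nat \<Rightarrow> real" where
  "edge_prob s K P =
     real (card {(A, B). A \<subseteq> {..<P} \<and> B \<subseteq> {..<P} \<and> card A = K \<and> card B = K
                          \<and> s \<le> card (A \<inter> B)})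
     / (real (card {A. A \<subseteq> {..<P} \<and> card A = K}))^2"

definition main_term :: "nat \<Rightarrow> nat \<Rightarrow> nat \<Rightarrow> real" where
  "main_term s K P = real K ^ (2 * s) / (fact s * real P ^ s)"

end

theory Submission
  imports Defs "HOL-Real_Asymp.Real_Asymp"
begin

text \<open>Fixing the first vertex's set \<open>A\<close>, the edge probability \<open>q\<close> is the fraction of \<open>K\<close>-sets
  meeting \<open>A\<close> in at least \<open>s\<close> items. A union bound over the \<open>s\<close>-subsets of \<open>A\<close> gives
  \<open>q \<le> U = C(K,s)\<^sup>2 / C(P,s)\<close>; counting the sets that meet an \<open>a\<close>-subset of \<open>A\<close> in exactly
  \<open>s\<close> items gives \<open>q \<ge> U(a) (1 - a\<^sup>2/(P - a + 1))\<close>. Comparing falling factorials with powers,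
  \<open>U\<close> is the main term \<open>M = K\<^sup>2\<^sup>s/(s! P\<^sup>s)\<close> up to a relative error \<open>O(1/K + 1/P)\<close>, so
  \<open>|q - M| = O(M (K\<^sup>2/P + s(s-1)/K + 1/P))\<close>.

  When \<open>n M \<asymp> ln n\<close> and \<open>P = \<Omega>(n)\<close>, each of \<open>K\<^sup>2/P\<close>, \<open>s(s-1)/K\<close> and \<open>1/P\<close> is \<open>o(1/ln n)\<close>,
  whence \<open>|q - M| = o(1/n) = o(M)\<close>. In case (a) this regime is the hypothesis; in case (b) it
  follows from \<open>n q \<asymp> ln n\<close>, because \<open>K\<^sup>2 \<ge> P/4\<close> would keep \<open>q\<close> bounded away from \<open>0\<close>, and
  otherwise \<open>q \<ge> U/2 \<ge> M s!\<^sup>2/(2 s\<^sup>2\<^sup>s)\<close>.\<close>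

lemma card_subsets_containing:
  assumes "finite X" "T \<subseteq> X" "card T \<le> b"
  shows "card {B. B \<subseteq> X \<and> card B = b \<and> T \<subseteq> B} = (card X - card T) choose (b - card T)"
proof -
  have fT: "finite T" using finite_subset[OF assms(2,1)] .
  have "bij_betw (\<lambda>B. B - T) {B. B \<subseteq> X \<and> card B = b \<and> T \<subseteq> B} {C. C \<subseteq> X - T \<and> card C = b - card T}"
  proof (rule bij_betw_byWitness[where f' = "\<lambda>C. C \<union> T"])
    show "(\<lambda>C. C \<union> T) ` {C. C \<subseteq> X - T \<and> card C = b - card T} \<subseteq> {B. B \<subseteq> X \<and> card B = b \<and> T \<subseteq> B}"
    proof clarify
      fix C assume C: "C \<subseteq> X - T" "card C = b - card T"
      then have "card (C \<union> T) = card C + card T"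
        using finite_subset[OF C(1) finite_Diff[OF assms(1)]] fT by (intro card_Un_disjoint) auto
      with C assms show "C \<union> T \<subseteq> X \<and> card (C \<union> T) = b \<and> T \<subseteq> C \<union> T" by auto
    qed
    show "(\<lambda>B. B - T) ` {B. B \<subseteq> X \<and> card B = b \<and> T \<subseteq> B} \<subseteq> {C. C \<subseteq> X - T \<and> card C = b - card T}"
      using fT by (auto simp: card_Diff_subset)
  qed auto
  then have "card {B. B \<subseteq> X \<and> card B = b \<and> T \<subseteq> B} = card {C. C \<subseteq> X - T \<and> card C = b - card T}"
    by (rule bij_betw_same_card)
  also have "\<dots> = card (X - T) choose (b - card T)"
    using assms by (intro n_subsets) simp
  finally show ?thesis
    using assms fT by (simp add: card_Diff_subset)
qed

lemma card_subsets_with_intersection: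
  assumes "finite X" "A \<subseteq> X" "T \<subseteq> A" "card T \<le> b"
  shows "card {B. B \<subseteq> X \<and> card B = b \<and> A \<inter> B = T} = (card X - card A) choose (b - card T)"
proof -
  have fin: "finite A" "finite T"
    using finite_subset[OF assms(2,1)] finite_subset[OF assms(3)] by auto
  have "bij_betw (\<lambda>B. B - T) {B. B \<subseteq> X \<and> card B = b \<and> A \<inter> B = T} {C. C \<subseteq> X - A \<and> card C = b - card T}"
  proof (rule bij_betw_byWitness[where f' = "\<lambda>C. C \<union> T"])
    show "(\<lambda>C. C \<union> T) ` {C. C \<subseteq> X - A \<and> card C = b - card T} \<subseteq> {B. B \<subseteq> X \<and> card B = b \<and> A \<inter> B = T}"
    proof clarify
      fix C assume C: "C \<subseteq> X - A" "card C = b - card T"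
      then have "card (C \<union> T) = card C + card T"
        using finite_subset[OF C(1) finite_Diff[OF assms(1)]] fin assms by (intro card_Un_disjoint) auto
      with C assms show "C \<union> T \<subseteq> X \<and> card (C \<union> T) = b \<and> A \<inter> (C \<union> T) = T" by auto
    qed
    show "(\<lambda>B. B - T) ` {B. B \<subseteq> X \<and> card B = b \<and> A \<inter> B = T} \<subseteq> {C. C \<subseteq> X - A \<and> card C = b - card T}"
    proof clarify
      fix B assume B: "B \<subseteq> X" "b = card B" "T = A \<inter> B"
      show "B - A \<inter> B \<subseteq> X - A \<and> card (B - A \<inter> B) = card B - card (A \<inter> B)"
        using B fin by (auto simp: card_Diff_subset)
    qed
    show "\<forall>B\<in>{B. B \<subseteq> X \<and> card B = b \<and> A \<inter> B = T}. B - T \<union> T = B" by blast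
    show "\<forall>C\<in>{C. C \<subseteq> X - A \<and> card C = b - card T}. C \<union> T - T = C" using assms(3) by blast
  qed
  then have "card {B. B \<subseteq> X \<and> card B = b \<and> A \<inter> B = T} = card {C. C \<subseteq> X - A \<and> card C = b - card T}"
    by (rule bij_betw_same_card)
  also have "\<dots> = card (X - A) choose (b - card T)"
    using assms(1) by (intro n_subsets) simp
  also have "card (X - A) = card X - card A"
    using fin(1) assms(2) by (rule card_Diff_subset)
  finally show ?thesis .
qed

definition overlapping_subsets :: "nat \<Rightarrow> nat \<Rightarrow> nat set \<Rightarrow> nat \<Rightarrow> nat set set" where
  "overlapping_subsets s P A b = {B. B \<subseteq> {..<P} \<and> card B = b \<and> s \<le> card (A \<inter> B)}"

lemma finite_overlapping_subsets: "finite (overlapping_subsets s P A b)"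
  unfolding overlapping_subsets_def by (rule finite_subset[of _ "Pow {..<P}"]) auto

lemma card_overlapping_subsets_le:
  assumes "A \<subseteq> {..<P}" "card A = a" "s \<le> b"
  shows "card (overlapping_subsets s P A b) \<le> (a choose s) * ((P - s) choose (b - s))"
proof -
  define I where "I = {T. T \<subseteq> A \<and> card T = s}"
  have fA: "finite A" using finite_subset[OF assms(1)] by simp
  have "overlapping_subsets s P A b \<subseteq> (\<Union>T\<in>I. {B. B \<subseteq> {..<P} \<and> card B = b \<and> T \<subseteq> B})"
  proof
    fix B assume "B \<in> overlapping_subsets s P A b"
    then have B: "B \<subseteq> {..<P}" "card B = b" "s \<le> card (A \<inter> B)" by (auto simp: overlapping_subsets_def)
    obtain T where "T \<subseteq> A \<inter> B" "card T = s" using obtain_subset_with_card_n[OF B(3)] by metis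
    then show "B \<in> (\<Union>T\<in>I. {B. B \<subseteq> {..<P} \<and> card B = b \<and> T \<subseteq> B})" using B by (auto simp: I_def)
  qed
  then have "card (overlapping_subsets s P A b) \<le> card (\<Union>T\<in>I. {B. B \<subseteq> {..<P} \<and> card B = b \<and> T \<subseteq> B})"
    by (rule card_mono[rotated]) (auto intro: finite_subset[of _ "Pow {..<P}"])
  also have "\<dots> \<le> (\<Sum>T\<in>I. card {B. B \<subseteq> {..<P} \<and> card B = b \<and> T \<subseteq> B})"
    by (rule card_UN_le) (auto simp: I_def fA)
  also have "\<dots> = (\<Sum>T\<in>I. (P - s) choose (b - s))"
    by (rule sum.cong) (use assms in \<open>auto simp: I_def card_subsets_containing\<close>)
  also have "\<dots> = (a choose s) * ((P - s) choose (b - s))"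
    using n_subsets[OF fA, of s] assms(2) by (simp add: I_def)
  finally show ?thesis .
qed

lemma card_overlapping_subsets_ge:
  assumes "A \<subseteq> {..<P}" "card A = a" "s \<le> b"
  shows "(a choose s) * ((P - a) choose (b - s)) \<le> card (overlapping_subsets s P A b)"
proof -
  define I where "I = {T. T \<subseteq> A \<and> card T = s}"
  have fA: "finite A" using finite_subset[OF assms(1)] by simp
  have "(a choose s) * ((P - a) choose (b - s)) = (\<Sum>T\<in>I. (P - a) choose (b - s))"
    using n_subsets[OF fA, of s] assms(2) by (simp add: I_def)
  also have "\<dots> = (\<Sum>T\<in>I. card {B. B \<subseteq> {..<P} \<and> card B = b \<and> A \<inter> B = T})"
    by (rule sum.cong) (use assms in \<open>auto simp: I_def card_subsets_with_intersection\<close>)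
  also have "\<dots> = card (\<Union>T\<in>I. {B. B \<subseteq> {..<P} \<and> card B = b \<and> A \<inter> B = T})"
    by (rule card_UN_disjoint[symmetric]) (auto simp: I_def fA intro: finite_subset[of _ "Pow {..<P}"])
  also have "\<dots> \<le> card (overlapping_subsets s P A b)"
    by (rule card_mono[OF finite_overlapping_subsets]) (auto simp: I_def overlapping_subsets_def)
  finally show ?thesis .
qed

lemma binomial_Suc_times_Suc: "(n choose Suc k) * Suc k = (n choose k) * (n - k)"
  by (metis binomial_absorb_comp binomial_absorption mult.commute)

text \<open>Double counting: \<open>(B, x) \<mapsto> (insert x B, x)\<close> is injective on pairs with \<open>x \<notin> B\<close>.\<close>
lemma card_overlapping_subsets_Suc:
  assumes "b < P"
  shows "card (overlapping_subsets s P A b) * (P - b) \<le> card (overlapping_subsets s P A (Suc b)) * Suc b"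
proof -
  define S where "S = Sigma (overlapping_subsets s P A b) (\<lambda>B. {..<P} - B)"
  define S' where "S' = Sigma (overlapping_subsets s P A (Suc b)) (\<lambda>B. B)"
  have "card S = (\<Sum>B\<in>overlapping_subsets s P A b. card ({..<P} - B))"
    unfolding S_def by (rule card_SigmaI) (auto simp: finite_overlapping_subsets)
  also have "\<dots> = (\<Sum>B\<in>overlapping_subsets s P A b. P - b)"
    by (rule sum.cong) (auto simp: overlapping_subsets_def card_Diff_subset finite_subset)
  also have "\<dots> = card (overlapping_subsets s P A b) * (P - b)"
    by simp
  finally have card_S: "card S = card (overlapping_subsets s P A b) * (P - b)" .
  have fin_S': "finite S'"
    unfolding S'_def by (rule finite_SigmaI) (auto simp: finite_overlapping_subsets overlapping_subsets_def finite_subset)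
  have "card S' = (\<Sum>B\<in>overlapping_subsets s P A (Suc b). card B)"
    unfolding S'_def by (rule card_SigmaI) (auto simp: finite_overlapping_subsets overlapping_subsets_def finite_subset)
  also have "\<dots> = card (overlapping_subsets s P A (Suc b)) * Suc b"
    by (simp add: overlapping_subsets_def)
  finally have card_S': "card S' = card (overlapping_subsets s P A (Suc b)) * Suc b" .
  have inj: "inj_on (\<lambda>(B, x). (insert x B, x)) S"
    unfolding S_def by (auto simp: inj_on_def) (metis Diff_insert_absorb)+
  have "(\<lambda>(B, x). (insert x B, x)) ` S \<subseteq> S'"
  proof clarify
    fix B x assume "(B, x) \<in> S"
    then have B: "B \<subseteq> {..<P}" "card B = b" "s \<le> card (A \<inter> B)" "x < P" "x \<notin> B"
      by (auto simp: S_def overlapping_subsets_def)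
    have fB: "finite B" using finite_subset[OF B(1)] by simp
    have "card (A \<inter> B) \<le> card (A \<inter> insert x B)" by (rule card_mono) (use fB in auto)
    then show "(insert x B, x) \<in> S'" using B fB by (auto simp: S'_def overlapping_subsets_def)
  qed
  from card_inj_on_le[OF inj this fin_S'] show ?thesis
    using card_S card_S' by simp
qed

lemma overlapping_subsets_fraction_mono:
  assumes "b \<le> b'" "b' \<le> P"
  shows "card (overlapping_subsets s P A b) / (P choose b)
           \<le> card (overlapping_subsets s P A b') / (P choose b')"
  using assms
proof (induction b' rule: dec_induct)
  case (step m)
  let ?G = "\<lambda>b. real (card (overlapping_subsets s P A b))"
  have "m < P" using step by simp
  have binom: "real (P choose Suc m) * Suc m = real (P choose m) * (P - m)"
    using binomial_Suc_times_Suc[of P m] by (metis of_nat_mult)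
  have count: "?G m * (P - m) \<le> ?G (Suc m) * Suc m"
    using card_overlapping_subsets_Suc[OF \<open>m < P\<close>, of s A] by (metis of_nat_le_iff of_nat_mult)
  have "?G m / (P choose m) = ?G m * (P - m) / ((P choose m) * (P - m))"
    using \<open>m < P\<close> by simp
  also have "\<dots> \<le> ?G (Suc m) * Suc m / ((P choose m) * (P - m))"
    by (rule divide_right_mono[OF count]) simp
  also have "\<dots> = ?G (Suc m) / (P choose Suc m)"
    by (simp flip: binom)
  finally show ?case using step by linarith
qed simp

lemma overlapping_subsets_mono:
  assumes "A' \<subseteq> A"
  shows "overlapping_subsets s P A' b \<subseteq> overlapping_subsets s P A b"
proof
  fix B assume "B \<in> overlapping_subsets s P A' b"
  then have B: "B \<subseteq> {..<P}" "card B = b" "s \<le> card (A' \<inter> B)" by (auto simp: overlapping_subsets_def)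
  have "card (A' \<inter> B) \<le> card (A \<inter> B)"
    using assms finite_subset[OF B(1)] by (intro card_mono) auto
  then show "B \<in> overlapping_subsets s P A b" using B by (auto simp: overlapping_subsets_def)
qed

lemma binomial_diff_ge:
  assumes "m \<le> k" "k \<le> n"
  shows "real (n choose m) * (1 - real m * (real d / (real n - real k + 1))) \<le> real ((n - d) choose m)"
  using assms(1)
proof (induction m)
  case (Suc m)
  define r where "r = real d / (real n - real k + 1)"
  have den: "real n - real k + 1 > 0" using assms by simp
  have r0: "r \<ge> 0" unfolding r_def using den by simp
  have IH: "real (n choose m) * (1 - real m * r) \<le> real ((n - d) choose m)"
    using Suc unfolding r_def by simp
  show ?case
  proof (cases "1 - real (Suc m) * r \<le> 0")
    case True
    then have "real (n choose Suc m) * (1 - real (Suc m) * r) \<le> 0" by (simp add: mult_nonneg_nonpos)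
    then show ?thesis unfolding r_def[symmetric] by (meson of_nat_0_le_iff order_trans)
  next
    case False
    then have r_lt: "real m * r + r < 1" by (simp add: algebra_simps)
    moreover have "0 \<le> real m * r" using r0 by simp
    ultimately have "r < 1" by linarith
    then have "real d < real n - real k + 1" unfolding r_def using den by (simp add: divide_less_eq)
    then have dm: "d + m < n" using Suc.prems by linarith
    have binom_n: "real (n choose Suc m) * Suc m = real (n choose m) * (real n - real m)"
      using arg_cong[OF binomial_Suc_times_Suc[of n m], of real] dm by (simp add: algebra_simps)
    have "real (n - d - m) = real n - real d - real m" using dm by (simp add: of_nat_diff)
    then have binom_nd: "real ((n - d) choose Suc m) * Suc m = real ((n - d) choose m) * (real n - real d - real m)"
      using binomial_Suc_times_Suc[of "n - d" m] by (metis of_nat_mult)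
    have "real d \<le> (real n - real k + 1) * r" unfolding r_def using den by simp
    also have "\<dots> \<le> (real n - real m) * r" using Suc.prems r0 by (intro mult_right_mono) auto
    finally have shrink: "(real n - real m) * (1 - r) \<le> real n - real d - real m"
      by (simp add: algebra_simps)
    have bernoulli: "1 - real (Suc m) * r \<le> (1 - real m * r) * (1 - r)"
      using r0 by (simp add: algebra_simps)
    have "real (n choose Suc m) * (1 - real (Suc m) * r) * Suc m
        = real (n choose m) * (real n - real m) * (1 - real (Suc m) * r)"
      by (subst binom_n[symmetric]) (simp only: mult_ac)
    also have "\<dots> \<le> real (n choose m) * (real n - real m) * ((1 - real m * r) * (1 - r))"
      using dm bernoulli by (intro mult_left_mono) auto
    also have "\<dots> = (real (n choose m) * (1 - real m * r)) * ((real n - real m) * (1 - r))"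
      by simp
    also have "\<dots> \<le> real ((n - d) choose m) * (real n - real d - real m)"
      using r0 r_lt dm \<open>r < 1\<close> by (intro mult_mono[OF IH shrink]) auto
    also have "\<dots> = real ((n - d) choose Suc m) * Suc m"
      by (simp only: binom_nd)
    finally show ?thesis
      unfolding r_def[symmetric] by (simp del: of_nat_Suc)
  qed
qed simp

definition union_bound :: "nat \<Rightarrow> nat \<Rightarrow> nat \<Rightarrow> real" where
  "union_bound s K P = real (K choose s)^2 / real (P choose s)"

lemma binomial_fraction_eq:
  assumes "s \<le> K" "K \<le> P"
  shows "real ((P - s) choose (K - s)) / real (P choose K) = real (K choose s) / real (P choose s)"
proof -
  have "real (P choose K) * real (K choose s) = real (P choose s) * real ((P - s) choose (K - s))"
    using choose_mult[OF assms] by (metis of_nat_mult)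
  moreover have "real (P choose K) > 0" "real (P choose s) > 0" using assms by auto
  ultimately show ?thesis by (simp add: field_simps)
qed

lemma overlapping_fraction_le:
  assumes "A \<subseteq> {..<P}" "card A = K" "s \<le> K" "K \<le> P"
  shows "card (overlapping_subsets s P A K) / (P choose K) \<le> union_bound s K P"
proof -
  have "real (card (overlapping_subsets s P A K)) \<le> real (K choose s) * real ((P - s) choose (K - s))"
    using card_overlapping_subsets_le[OF assms(1,2,3)] by (metis of_nat_le_iff of_nat_mult)
  then have "card (overlapping_subsets s P A K) / (P choose K)
             \<le> real (K choose s) * (real ((P - s) choose (K - s)) / (P choose K))"
    by (simp add: divide_right_mono)
  also have "\<dots> = union_bound s K P"
    unfolding binomial_fraction_eq[OF assms(3,4)] union_bound_def by (simp add: power2_eq_square)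
  finally show ?thesis .
qed

text \<open>Shrink \<open>A\<close> to an \<open>a\<close>-subset and the chosen sets to size \<open>a\<close>, then count the \<open>a\<close>-sets
  meeting that subset in exactly \<open>s\<close> points.\<close>
lemma overlapping_fraction_ge:
  assumes "A \<subseteq> {..<P}" "card A = K" "s \<le> a" "a \<le> K" "K \<le> P"
  shows "union_bound s a P * (1 - real a ^ 2 / (real P - real a + 1))
           \<le> card (overlapping_subsets s P A K) / (P choose K)"
proof -
  obtain A' where A': "A' \<subseteq> A" "card A' = a"
    using obtain_subset_with_card_n[of a A] assms by auto
  have den: "real P - real a + 1 > 0" using assms by simp
  have "(1 - real a ^ 2 / (real P - real a + 1)) \<le> 1 - real (a - s) * (real (a - s) / (real (P - s) - real (a - s) + 1))"
    using den assms by (simp add: of_nat_diff power2_eq_square divide_right_mono mult_mono)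
  then have "union_bound s a P * (1 - real a ^ 2 / (real P - real a + 1))
      \<le> union_bound s a P * (1 - real (a - s) * (real (a - s) / (real (P - s) - real (a - s) + 1)))"
    by (intro mult_left_mono) (simp_all add: union_bound_def)
  also have "\<dots> = real (a choose s) * (real ((P - s) choose (a - s)) / (P choose a))
          * (1 - real (a - s) * (real (a - s) / (real (P - s) - real (a - s) + 1)))"
    unfolding binomial_fraction_eq[OF assms(3) order_trans[OF assms(4,5)]] union_bound_def
    by (simp add: power2_eq_square)
  also have "\<dots> = real (a choose s) * (real ((P - s) choose (a - s))
          * (1 - real (a - s) * (real (a - s) / (real (P - s) - real (a - s) + 1)))) / (P choose a)"
    by simp
  also have "\<dots> \<le> real (a choose s) * real ((P - s - (a - s)) choose (a - s)) / (P choose a)"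
    using assms by (intro divide_right_mono mult_left_mono binomial_diff_ge) auto
  also have "\<dots> \<le> card (overlapping_subsets s P A' a) / (P choose a)"
    using card_overlapping_subsets_ge[of A' P a s a] A' assms
    by (intro divide_right_mono) (auto simp flip: of_nat_mult)
  also have "\<dots> \<le> card (overlapping_subsets s P A a) / (P choose a)"
    by (intro divide_right_mono of_nat_mono card_mono finite_overlapping_subsets overlapping_subsets_mono A') simp
  also have "\<dots> \<le> card (overlapping_subsets s P A K) / (P choose K)"
    using assms by (intro overlapping_subsets_fraction_mono) auto
  finally show ?thesis .
qed

lemma edge_prob_eq_average:
  "edge_prob s K P = (\<Sum>A | A \<subseteq> {..<P} \<and> card A = K. card (overlapping_subsets s P A K) / (P choose K))
                       / card {A. A \<subseteq> {..<P} \<and> card A = K}"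
proof -
  have "{(A, B). A \<subseteq> {..<P} \<and> B \<subseteq> {..<P} \<and> card A = K \<and> card B = K \<and> s \<le> card (A \<inter> B)}
        = Sigma {A. A \<subseteq> {..<P} \<and> card A = K} (\<lambda>A. overlapping_subsets s P A K)"
    by (auto simp: overlapping_subsets_def)
  moreover have "card (Sigma {A. A \<subseteq> {..<P} \<and> card A = K} (\<lambda>A. overlapping_subsets s P A K))
     = (\<Sum>A | A \<subseteq> {..<P} \<and> card A = K. card (overlapping_subsets s P A K))"
    by (rule card_SigmaI) (auto simp: finite_overlapping_subsets intro: finite_subset[of _ "Pow {..<P}"])
  ultimately show ?thesis
    using n_subsets[of "{..<P}" K] unfolding edge_prob_def
    by (simp add: power2_eq_square flip: sum_divide_distrib)
qed

lemma edge_prob_le_union_bound: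
  assumes "s \<le> K" "K \<le> P"
  shows "edge_prob s K P \<le> union_bound s K P"
proof -
  let ?S = "{A. A \<subseteq> {..<P} \<and> card A = K}"
  have "(\<Sum>A\<in>?S. card (overlapping_subsets s P A K) / (P choose K)) \<le> card ?S * union_bound s K P"
    using assms by (intro sum_bounded_above overlapping_fraction_le) auto
  moreover have "card ?S > 0" using assms n_subsets[of "{..<P}" K] by simp
  ultimately show ?thesis
    unfolding edge_prob_eq_average by (simp add: pos_divide_le_eq mult.commute)
qed

lemma edge_prob_ge:
  assumes "s \<le> a" "a \<le> K" "K \<le> P"
  shows "union_bound s a P * (1 - real a ^ 2 / (real P - real a + 1)) \<le> edge_prob s K P"
proof -
  let ?S = "{A. A \<subseteq> {..<P} \<and> card A = K}"
  have "card ?S * (union_bound s a P * (1 - real a ^ 2 / (real P - real a + 1)))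
        \<le> (\<Sum>A\<in>?S. card (overlapping_subsets s P A K) / (P choose K))"
    using assms by (intro sum_bounded_below overlapping_fraction_ge) auto
  moreover have "card ?S > 0" using assms n_subsets[of "{..<P}" K] by simp
  ultimately show ?thesis
    unfolding edge_prob_eq_average by (simp add: pos_le_divide_eq mult.commute)
qed

lemma fact_binomial_eq_prod: "fact k * real (n choose k) = (\<Prod>i<k. real n - real i)"
  by (simp add: binomial_gbinomial gbinomial_mult_fact atLeast0LessThan)

lemma fact_binomial_le_power: "fact k * real (n choose k) \<le> real n ^ k"
  using binomial_fact_pow[of n k] by (metis mult.commute of_nat_fact of_nat_le_iff of_nat_mult of_nat_power)

lemma power_diff_le_prod: "real j \<le> x \<Longrightarrow> (x - real j) ^ j \<le> (\<Prod>i<j. x - real i)"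
  by (rule order_trans[OF _ prod_mono[where f = "\<lambda>_. x - real j"]]) auto

lemma power_mult_le_prod:
  assumes "x > 0" "real j \<le> x"
  shows "x ^ j * (1 - real j * (real j - 1) / x) \<le> (\<Prod>i<j. x - real i)"
  using assms(2)
proof (induction j)
  case (Suc j)
  have "x ^ Suc j * (1 - real (Suc j) * (real (Suc j) - 1) / x)
      \<le> x ^ Suc j * ((1 - real j * (real j - 1) / x) * (1 - real j / x))"
  proof (rule mult_left_mono)
    have "(1 - real j * (real j - 1) / x) * (1 - real j / x)
          = 1 - real j * real j / x + (real j * (real j - 1) / x) * (real j / x)"
      using assms(1) by (simp add: field_simps)
    moreover have "real j * real j / x \<le> real (Suc j) * (real (Suc j) - 1) / x"
      using assms(1) by (intro divide_right_mono) (auto simp: algebra_simps)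
    moreover have "0 \<le> (real j * (real j - 1) / x) * (real j / x)"
      using assms(1) by (cases j) auto
    ultimately show "1 - real (Suc j) * (real (Suc j) - 1) / x \<le> (1 - real j * (real j - 1) / x) * (1 - real j / x)"
      by linarith
  qed (use assms in simp)
  also have "\<dots> = x ^ j * (1 - real j * (real j - 1) / x) * (x - real j)"
    using assms(1) by (simp add: field_simps)
  also have "\<dots> \<le> (\<Prod>i<j. x - real i) * (x - real j)"
    using Suc by (intro mult_right_mono) auto
  finally show ?case by simp
qed simp

lemma union_bound_eq:
  "union_bound s K P = (fact s * real (K choose s))^2 / (fact s * (fact s * real (P choose s)))"
  unfolding union_bound_def by (simp add: power2_eq_square)

lemma main_term_eq: "main_term s K P = (real K ^ s)^2 / (fact s * real P ^ s)"
  unfolding main_term_def by (simp add: power_mult mult.commute)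

lemma union_bound_le_main_term:
  assumes "s \<le> P" "0 < P" "real s * (real s - 1) \<le> real P"
  shows "union_bound s K P * (1 - real s * (real s - 1) / real P) \<le> main_term s K P"
proof -
  let ?\<delta> = "1 - real s * (real s - 1) / real P"
  have FP: "0 < fact s * real (P choose s)" using assms by simp
  have P: "real P ^ s * ?\<delta> \<le> fact s * real (P choose s)"
    unfolding fact_binomial_eq_prod using assms by (intro power_mult_le_prod) auto
  have K: "(fact s * real (K choose s))^2 \<le> (real K ^ s)^2"
    using fact_binomial_le_power by (intro power_mono) auto
  have "(fact s * real (K choose s))^2 * (fact s * (real P ^ s * ?\<delta>))
        \<le> (real K ^ s)^2 * (fact s * (fact s * real (P choose s)))"
    using assms by (intro mult_mono[OF K mult_left_mono[OF P]]) auto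
  then show ?thesis
    unfolding union_bound_eq main_term_eq using FP assms
    by (simp add: field_simps)
qed

lemma main_term_le_union_bound:
  assumes "s \<le> K" "K \<le> P" "0 < K" "real s * (real s - 1) \<le> real K"
  shows "main_term s K P * (1 - real s * (real s - 1) / real K)^2 \<le> union_bound s K P"
proof -
  let ?c = "real s * (real s - 1)"
  have "?c / real K \<le> 1" using assms by simp
  then have "(real K ^ s * (1 - ?c / real K))^2 \<le> (fact s * real (K choose s))^2"
    unfolding fact_binomial_eq_prod using assms by (intro power_mono power_mult_le_prod) auto
  then have "(real K ^ s * (1 - ?c / real K))^2 / (fact s * real P ^ s) \<le> union_bound s K P"
    unfolding union_bound_eq using assms
    by (intro frac_le mult_left_mono fact_binomial_le_power) auto
  then show ?thesis
    unfolding main_term_eq by (simp add: power_mult_distrib)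
qed

lemma main_term_le_union_bound_const:
  assumes "1 \<le> s" "s \<le> K" "K \<le> P"
  shows "main_term s K P * (fact s ^ 2 / real s ^ (2 * s)) \<le> union_bound s K P"
proof -
  have "fact s * (real K / real s) ^ s \<le> fact s * real (K choose s)"
    using assms by (intro mult_left_mono binomial_ge_n_over_k_pow_k) auto
  then have "(fact s * (real K / real s) ^ s)^2 / (fact s * real P ^ s) \<le> union_bound s K P"
    unfolding union_bound_eq using assms
    by (intro frac_le mult_left_mono power_mono fact_binomial_le_power) auto
  moreover have "(fact s * (real K / real s) ^ s)^2 / (fact s * real P ^ s)
                 = main_term s K P * (fact s ^ 2 / real s ^ (2 * s))"
    unfolding main_term_eq by (simp add: power_mult_distrib power_divide power_mult field_simps)
  ultimately show ?thesis by simp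
qed

lemma union_bound_ge_power:
  assumes "s \<le> a" "s \<le> P"
  shows "(real a - real s) ^ (2 * s) / (fact s * real P ^ s) \<le> union_bound s a P"
proof -
  have "(real a - real s) ^ (2 * s) = ((real a - real s) ^ s)^2"
    by (simp add: power_mult mult.commute)
  also have "\<dots> \<le> (fact s * real (a choose s))^2"
    unfolding fact_binomial_eq_prod using assms by (intro power_mono power_diff_le_prod) auto
  finally show ?thesis
    unfolding union_bound_eq using assms
    by (intro frac_le mult_left_mono fact_binomial_le_power) auto
qed

lemma edge_prob_ge_union_bound:
  assumes "s \<le> K" "K \<le> P" "0 < K" "real K ^ 2 \<le> real P / 2"
  shows "union_bound s K P * (1 - 2 * real K ^ 2 / real P) \<le> edge_prob s K P"
proof -
  have "real K \<le> real K ^ 2" using assms by (simp add: power2_eq_square)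
  then have "real P / 2 \<le> real P - real K + 1" using assms by linarith
  then have "real K ^ 2 / (real P - real K + 1) \<le> real K ^ 2 / (real P / 2)"
    using assms by (intro divide_left_mono) auto
  then have "union_bound s K P * (1 - 2 * real K ^ 2 / real P)
             \<le> union_bound s K P * (1 - real K ^ 2 / (real P - real K + 1))"
    by (intro mult_left_mono) (auto simp: union_bound_def mult.commute)
  also have "\<dots> \<le> edge_prob s K P"
    using assms by (intro edge_prob_ge) auto
  finally show ?thesis .
qed

lemma union_bound_le_twice_main_term:
  assumes "s \<le> P" "0 < P" "real s * (real s - 1) \<le> real P / 2"
  shows "union_bound s K P \<le> 2 * main_term s K P"
proof -
  have "union_bound s K P * (1 / 2) \<le> union_bound s K P * (1 - real s * (real s - 1) / real P)"
    using assms by (intro mult_left_mono) (auto simp: union_bound_def field_simps)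
  also have "\<dots> \<le> main_term s K P"
    using assms by (intro union_bound_le_main_term) auto
  finally show ?thesis by simp
qed

lemma edge_prob_diff_main_term_le:
  fixes s K P :: nat
  defines "c \<equiv> real s * (real s - 1)" and "M \<equiv> main_term s K P"
  assumes "1 \<le> s" "s \<le> K" "K \<le> P" "c \<le> real P / 2" "c \<le> real K" "real K ^ 2 \<le> real P / 2"
  shows "\<bar>edge_prob s K P - M\<bar> \<le> 4 * M * (real K ^ 2 / real P) + 2 * c * M * (1 / real K + 1 / real P)"
proof -
  let ?U = "union_bound s K P"
  have pos: "0 < K" "0 < P" using assms by auto
  have c: "0 \<le> c" unfolding c_def using assms by simp
  have M: "0 \<le> M" unfolding M_def main_term_def by simp
  have U_2M: "?U \<le> 2 * M"
    unfolding M_def using assms pos by (intro union_bound_le_twice_main_term) auto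
  have "?U - edge_prob s K P \<le> ?U * (2 * real K ^ 2 / real P)"
    using edge_prob_ge_union_bound[of s K P] assms pos by (simp add: algebra_simps)
  also have "\<dots> \<le> 2 * M * (2 * real K ^ 2 / real P)"
    using U_2M by (intro mult_right_mono) auto
  finally have q_U: "\<bar>edge_prob s K P - ?U\<bar> \<le> 4 * M * (real K ^ 2 / real P)"
    using edge_prob_le_union_bound[of s K P] assms by simp
  have "?U - M \<le> ?U * (c / real P)"
    using union_bound_le_main_term[of s P K] assms pos unfolding c_def M_def by (simp add: algebra_simps)
  also have "\<dots> \<le> 2 * M * (c / real P)"
    using U_2M c by (intro mult_right_mono) auto
  finally have U_M: "?U - M \<le> 2 * c * M * (1 / real P)" by (simp add: ac_simps)
  have "M - ?U \<le> M * (1 - (1 - c / real K)^2)"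
    using main_term_le_union_bound[of s K P] assms pos unfolding c_def M_def by (simp add: algebra_simps)
  also have "\<dots> \<le> M * (2 * (c / real K))"
    using M c pos by (intro mult_left_mono) (auto simp: power2_eq_square algebra_simps)
  finally have M_U: "M - ?U \<le> 2 * c * M * (1 / real K)" by (simp add: ac_simps)
  have "0 \<le> 2 * c * M * (1 / real K)" "0 \<le> 2 * c * M * (1 / real P)"
    using c M by auto
  then show ?thesis
    using q_U U_M M_U by (simp add: algebra_simps abs_le_iff)
qed

text \<open>Take \<open>a = \<lfloor>\<surd>(\<epsilon> P)\<rfloor>\<close> in \<open>edge_prob_ge\<close>.\<close>
lemma edge_prob_ge_const:
  fixes \<epsilon> :: real
  assumes "1 \<le> s" "s \<le> K" "K \<le> P" "0 < \<epsilon>" "\<epsilon> \<le> 1/4"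
    and "\<epsilon> * real P \<le> real K ^ 2" "2 * (real s + 1) \<le> sqrt (\<epsilon> * real P)"
  shows "(\<epsilon> / 4) ^ s / (2 * fact s) \<le> edge_prob s K P"
proof -
  define r where "r = sqrt (\<epsilon> * real P)"
  define a where "a = nat \<lfloor>r\<rfloor>"
  have P: "real P > 0" using assms by simp
  have r: "0 \<le> r" "r^2 = \<epsilon> * real P" "2 * (real s + 1) \<le> r"
    unfolding r_def using assms by auto
  have a: "real a \<le> r" "r < real a + 1" unfolding a_def using r by linarith+
  have a_sq: "real a ^ 2 \<le> \<epsilon> * real P" using a r by (metis of_nat_0_le_iff power_mono)
  then have "real a ^ 2 \<le> real K ^ 2" using assms by linarith
  then have "real a \<le> real K" by (rule power2_le_imp_le) simp
  then have "a \<le> K" by simp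
  have a_s: "r / 2 \<le> real a - real s" using a(2) r(3) by (simp add: field_simps)
  then have "s \<le> a" using r by linarith
  have "(r / 2)^2 \<le> (real a - real s) ^ 2" using a_s r by (intro power_mono) auto
  then have sq: "(\<epsilon> / 4) * real P \<le> (real a - real s) ^ 2" using r by (simp add: power_divide)
  have "(\<epsilon> / 4) ^ s * real P ^ s = ((\<epsilon> / 4) * real P) ^ s"
    by (rule power_mult_distrib[symmetric])
  also have "\<dots> \<le> ((real a - real s) ^ 2) ^ s"
    using sq assms by (intro power_mono) auto
  also have "\<dots> = (real a - real s) ^ (2 * s)"
    by (simp add: power_mult)
  finally have "(\<epsilon> / 4) ^ s * real P ^ s \<le> (real a - real s) ^ (2 * s)" .
  then have "(\<epsilon> / 4) ^ s / fact s \<le> (real a - real s) ^ (2 * s) / (fact s * real P ^ s)"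
    using P by (simp add: field_simps)
  also have "\<dots> \<le> union_bound s a P"
    using \<open>s \<le> a\<close> assms by (intro union_bound_ge_power) auto
  finally have bound: "(\<epsilon> / 4) ^ s / fact s \<le> union_bound s a P" .
  have "\<epsilon> * real P \<le> 1 / 4 * real P" using assms by (intro mult_right_mono) auto
  then have a_quarter: "real a ^ 2 \<le> real P / 4" using a_sq by simp
  moreover have "real a \<le> real a ^ 2" using \<open>s \<le> a\<close> assms by (simp add: power2_eq_square)
  ultimately have "real P / 2 \<le> real P - real a + 1" by linarith
  with a_quarter have "real a ^ 2 / (real P - real a + 1) \<le> (real P / 4) / (real P / 2)"
    using P by (intro frac_le) auto
  then have half: "1 / 2 \<le> 1 - real a ^ 2 / (real P - real a + 1)" using P by simp
  have "(\<epsilon> / 4) ^ s / (2 * fact s) = (\<epsilon> / 4) ^ s / fact s * (1 / 2)" by simp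
  also have "\<dots> \<le> union_bound s a P * (1 - real a ^ 2 / (real P - real a + 1))"
    using assms by (intro mult_mono[OF bound half]) (auto simp: union_bound_def)
  also have "\<dots> \<le> edge_prob s K P"
    using \<open>s \<le> a\<close> \<open>a \<le> K\<close> assms by (intro edge_prob_ge) auto
  finally show ?thesis .
qed

lemma main_term_le_edge_prob:
  assumes "1 \<le> s" "s \<le> K" "K \<le> P" "16 * (real s + 1)^2 \<le> real P"
    and "edge_prob s K P < (1 / 16) ^ s / (2 * fact s)"
  shows "main_term s K P * (fact s ^ 2 / real s ^ (2 * s)) \<le> 2 * edge_prob s K P"
proof -
  have P: "real P > 0" using assms by simp
  have K_sq: "real K ^ 2 < real P / 4"
  proof (rule ccontr)
    assume "\<not> ?thesis"
    moreover have "2 * (real s + 1) \<le> sqrt (1 / 4 * real P)"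
    proof (rule real_le_rsqrt)
      have "(2 * (real s + 1))^2 = 4 * (real s + 1)^2" by (simp add: algebra_simps power2_eq_square)
      then show "(2 * (real s + 1))^2 \<le> 1 / 4 * real P" using assms(4) by simp
    qed
    ultimately have "(1 / 4 / 4) ^ s / (2 * fact s) \<le> edge_prob s K P"
      using assms by (intro edge_prob_ge_const) auto
    then show False using assms by simp
  qed
  have "union_bound s K P * (1 / 2) \<le> union_bound s K P * (1 - 2 * real K ^ 2 / real P)"
    using K_sq P by (intro mult_left_mono) (auto simp: union_bound_def field_simps)
  also have "\<dots> \<le> edge_prob s K P"
    using assms K_sq by (intro edge_prob_ge_union_bound) auto
  finally have "union_bound s K P \<le> 2 * edge_prob s K P" by simp
  with main_term_le_union_bound_const[OF assms(1-3)] show ?thesis by simp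
qed

lemma tendsto_zero_if_power_bounded:
  fixes f g :: "'a \<Rightarrow> real"
  assumes "0 < k" "eventually (\<lambda>x. 0 \<le> f x \<and> f x ^ k \<le> g x) F" "(g \<longlongrightarrow> 0) F"
  shows "(f \<longlongrightarrow> 0) F"
proof -
  have "((\<lambda>x. f x ^ k) \<longlongrightarrow> 0) F"
    by (rule tendsto_sandwich[OF _ _ tendsto_const assms(3)]) (use assms(2) in \<open>auto elim: eventually_mono\<close>)
  then have "((\<lambda>x. root k (f x ^ k)) \<longlongrightarrow> root k 0) F"
    by (rule tendsto_real_root)
  moreover have "eventually (\<lambda>x. root k (f x ^ k) = f x) F"
    using assms(2) by eventually_elim (use assms(1) in \<open>simp add: real_root_power_cancel\<close>)
  ultimately show ?thesis by (simp add: tendsto_cong)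
qed

lemma ln_add_bigo_ln_ln_bounds:
  fixes \<gamma> :: "nat \<Rightarrow> real"
  assumes "\<gamma> \<in> O(\<lambda>n. ln (ln (real n)))"
  shows "eventually (\<lambda>n. ln (real n) / 2 \<le> ln (real n) + \<gamma> n \<and> ln (real n) + \<gamma> n \<le> 2 * ln (real n)) sequentially"
proof -
  from assms obtain C where C: "eventually (\<lambda>n. \<bar>\<gamma> n\<bar> \<le> C * \<bar>ln (ln (real n))\<bar>) sequentially"
    by (elim landau_o.bigE) simp
  have "eventually (\<lambda>n. C * \<bar>ln (ln (real n))\<bar> \<le> ln (real n) / 2) sequentially" by real_asymp
  with C show ?thesis by eventually_elim auto
qed

locale connectivity_regime =
  fixes s :: nat and K P :: "nat \<Rightarrow> nat" and a b c0 :: real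
  assumes s_pos: "1 \<le> s"
    and K_P: "\<forall>n. s \<le> K n \<and> K n \<le> P n"
    and c0_pos: "0 < c0"
    and P_ge: "\<forall>\<^sub>F n in sequentially. c0 * real n \<le> real (P n)"
    and a_pos: "0 < a"
    and main_term_bounds: "\<forall>\<^sub>F n in sequentially. a * ln (real n) \<le> real n * main_term s (K n) (P n)
                               \<and> real n * main_term s (K n) (P n) \<le> b * ln (real n)"
begin

abbreviation M :: "nat \<Rightarrow> real" where "M n \<equiv> main_term s (K n) (P n)"

abbreviation c :: real where "c \<equiv> real s * (real s - 1)"

lemma K_pos: "0 < K n" and P_pos: "0 < P n"
  using K_P[rule_format, of n] s_pos by auto

lemma M_nonneg: "0 \<le> M n"
  by (simp add: main_term_def)

lemma ln_ge_1: "\<forall>\<^sub>F n in sequentially. 1 \<le> ln (real n)"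
  by real_asymp

lemma K_sq_over_P_ln_tendsto_zero:
  "((\<lambda>n. real (K n) ^ 2 / real (P n) * ln (real n)) \<longlongrightarrow> 0) sequentially"
proof (rule tendsto_zero_if_power_bounded[where k = s])
  show "((\<lambda>n. fact s * b * (ln (real n) ^ (s + 1) / real n)) \<longlongrightarrow> 0) sequentially"
    by (intro tendsto_mult_right_zero) real_asymp
  show "\<forall>\<^sub>F n in sequentially. 0 \<le> real (K n) ^ 2 / real (P n) * ln (real n)
          \<and> (real (K n) ^ 2 / real (P n) * ln (real n)) ^ s \<le> fact s * b * (ln (real n) ^ (s + 1) / real n)"
    using main_term_bounds ln_ge_1 eventually_gt_at_top[of 0]
  proof eventually_elim
    case (elim n)
    have "(real (K n) ^ 2 / real (P n) * ln (real n)) ^ s = (real (K n) ^ 2 / real (P n)) ^ s * ln (real n) ^ s"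
      by (rule power_mult_distrib)
    also have "\<dots> = fact s * M n * ln (real n) ^ s"
      unfolding main_term_def by (simp add: power_divide power_mult)
    also have "\<dots> \<le> fact s * (b * ln (real n) / real n) * ln (real n) ^ s"
      using elim by (intro mult_right_mono mult_left_mono) (auto simp: field_simps)
    also have "\<dots> = fact s * b * (ln (real n) ^ (s + 1) / real n)"
      by (simp add: field_simps)
    finally show ?case using elim by simp
  qed
qed (use s_pos in simp)

lemma ln_over_P_tendsto_zero: "((\<lambda>n. ln (real n) / real (P n)) \<longlongrightarrow> 0) sequentially"
proof (rule tendsto_sandwich[OF _ _ tendsto_const])
  show "((\<lambda>n. ln (real n) / real n / c0) \<longlongrightarrow> 0) sequentially"
    by (intro tendsto_divide_zero) real_asymp
  show "\<forall>\<^sub>F n in sequentially. 0 \<le> ln (real n) / real (P n)"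
    using ln_ge_1 by eventually_elim simp
  show "\<forall>\<^sub>F n in sequentially. ln (real n) / real (P n) \<le> ln (real n) / real n / c0"
    using ln_ge_1 P_ge eventually_gt_at_top[of 0]
  proof eventually_elim
    case (elim n)
    then have "ln (real n) / real (P n) \<le> ln (real n) / (c0 * real n)"
      using c0_pos P_pos[of n] by (intro divide_left_mono) auto
    then show ?case by (simp add: field_simps)
  qed
qed

text \<open>For \<open>s \<ge> 2\<close> the lower bound on the main term forces \<open>K\<^sup>2\<^sup>s \<ge> s! a c\<^sub>0\<^sup>s n ln n\<close>.\<close>
lemma ln_over_K_tendsto_zero:
  assumes "2 \<le> s"
  shows "((\<lambda>n. ln (real n) / real (K n)) \<longlongrightarrow> 0) sequentially"
proof (rule tendsto_zero_if_power_bounded[where k = "2 * s"])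
  define C where "C = fact s * a * c0 ^ s"
  have C: "0 < C" unfolding C_def using a_pos c0_pos by simp
  show "((\<lambda>n. ln (real n) ^ (2 * s - 1) / real n / C) \<longlongrightarrow> 0) sequentially"
    by (intro tendsto_divide_zero) real_asymp
  show "\<forall>\<^sub>F n in sequentially. 0 \<le> ln (real n) / real (K n)
          \<and> (ln (real n) / real (K n)) ^ (2 * s) \<le> ln (real n) ^ (2 * s - 1) / real n / C"
    using main_term_bounds ln_ge_1 P_ge eventually_ge_at_top[of 1]
  proof eventually_elim
    case (elim n)
    then have n: "1 \<le> real n" by simp
    have L: "0 < ln (real n)" using \<open>1 \<le> ln (real n)\<close> by linarith
    have "real n * real n \<le> real n ^ s"
      using power_increasing[OF assms n] by (simp add: power2_eq_square)
    then have "C * ln (real n) * real n = fact s * (a * ln (real n) / real n) * (c0 ^ s * (real n * real n))"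
      unfolding C_def using n by (simp add: field_simps)
    also have "\<dots> \<le> fact s * M n * (c0 * real n) ^ s"
      using elim n a_pos c0_pos M_nonneg[of n] \<open>real n * real n \<le> real n ^ s\<close>
      by (intro mult_mono mult_left_mono) (auto simp: field_simps power_mult_distrib)
    also have "\<dots> \<le> fact s * M n * real (P n) ^ s"
      using elim c0_pos by (intro mult_left_mono power_mono) (auto simp: main_term_def)
    also have "\<dots> = real (K n) ^ (2 * s)"
      unfolding main_term_def using P_pos[of n] by simp
    finally have K_large: "C * ln (real n) * real n \<le> real (K n) ^ (2 * s)" .
    have "(ln (real n) / real (K n)) ^ (2 * s) = ln (real n) * ln (real n) ^ (2 * s - 1) / real (K n) ^ (2 * s)"
      using assms by (simp add: power_divide flip: power_Suc)
    also have "\<dots> \<le> ln (real n) * ln (real n) ^ (2 * s - 1) / (C * ln (real n) * real n)"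
      using K_large C n L K_pos[of n] by (intro divide_left_mono mult_pos_pos) auto
    also have "\<dots> = ln (real n) ^ (2 * s - 1) / real n / C"
      using L by simp
    finally show ?case using elim K_pos[of n] by simp
  qed
qed (use assms in simp)

lemma c_ln_over_K_tendsto_zero: "((\<lambda>n. c * (ln (real n) / real (K n))) \<longlongrightarrow> 0) sequentially"
proof (cases "s = 1")
  case False
  with s_pos show ?thesis
    using tendsto_mult_right_zero[OF ln_over_K_tendsto_zero] by simp
qed simp

lemma c_le_K: "\<forall>\<^sub>F n in sequentially. c \<le> real (K n)"
proof (cases "s = 1")
  case False
  with s_pos have "2 \<le> s" by simp
  have "\<forall>\<^sub>F n in sequentially. ln (real n) / real (K n) < 1"
    using order_tendstoD(2)[OF ln_over_K_tendsto_zero[OF \<open>2 \<le> s\<close>]] by simp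
  moreover have "\<forall>\<^sub>F n in sequentially. c \<le> ln (real n)" by real_asymp
  ultimately show ?thesis
  proof eventually_elim
    case (elim n)
    then show ?case using K_pos[of n] by (simp add: divide_less_eq)
  qed
qed simp

lemma scaled_diff_tendsto_zero:
  "((\<lambda>n. real n * \<bar>edge_prob s (K n) (P n) - M n\<bar>) \<longlongrightarrow> 0) sequentially"
proof (rule tendsto_sandwich[OF _ _ tendsto_const])
  let ?x = "\<lambda>n. real (K n) ^ 2 / real (P n)" and ?L = "\<lambda>n. ln (real n)"
  have c: "0 \<le> c" using s_pos by simp
  let ?g = "\<lambda>n. b * (4 * (?x n * ?L n) + 2 * (c * (?L n / real (K n))) + 2 * c * (?L n / real (P n)))"
  have "(?g \<longlongrightarrow> b * (4 * 0 + 2 * 0 + 2 * c * 0)) sequentially"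
    by (intro tendsto_intros K_sq_over_P_ln_tendsto_zero c_ln_over_K_tendsto_zero ln_over_P_tendsto_zero)
  then show "(?g \<longlongrightarrow> 0) sequentially" by simp
  show "\<forall>\<^sub>F n in sequentially. 0 \<le> real n * \<bar>edge_prob s (K n) (P n) - M n\<bar>" by simp
  have "\<forall>\<^sub>F n in sequentially. ?x n * ?L n < 1 / 2"
    using order_tendstoD(2)[OF K_sq_over_P_ln_tendsto_zero, of "1 / 2"] by simp
  moreover have "\<forall>\<^sub>F n in sequentially. 2 * c / c0 \<le> real n" by real_asymp
  ultimately show "\<forall>\<^sub>F n in sequentially. real n * \<bar>edge_prob s (K n) (P n) - M n\<bar> \<le> ?g n"
    using main_term_bounds ln_ge_1 P_ge c_le_K
  proof eventually_elim
    case (elim n)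
    have "?x n * 1 \<le> ?x n * ?L n" using elim by (intro mult_left_mono) auto
    then have x: "real (K n) ^ 2 \<le> real (P n) / 2" using elim P_pos[of n] by (simp add: field_simps)
    have "c \<le> c0 * real n / 2" using elim c0_pos by (simp add: field_simps)
    then have "c \<le> real (P n) / 2" using elim by simp
    moreover have "c \<le> real (K n)" using elim by simp
    moreover have "s \<le> K n" "K n \<le> P n" using K_P by auto
    ultimately have "\<bar>edge_prob s (K n) (P n) - M n\<bar>
                     \<le> 4 * M n * ?x n + 2 * c * M n * (1 / real (K n) + 1 / real (P n))"
      using edge_prob_diff_main_term_le[OF s_pos _ _ _ _ x] by blast
    then have "real n * \<bar>edge_prob s (K n) (P n) - M n\<bar>
               \<le> real n * (4 * M n * ?x n + 2 * c * M n * (1 / real (K n) + 1 / real (P n)))"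
      by (rule mult_left_mono) simp
    also have "\<dots> = (real n * M n) * (4 * ?x n + 2 * c * (1 / real (K n) + 1 / real (P n)))"
      by (simp add: algebra_simps)
    also have "\<dots> \<le> (b * ?L n) * (4 * ?x n + 2 * c * (1 / real (K n) + 1 / real (P n)))"
      using elim c by (intro mult_right_mono) auto
    also have "\<dots> = ?g n" by (simp add: algebra_simps)
    finally show ?case .
  qed
qed

theorem edge_prob_asymptotics:
  "(\<lambda>n. edge_prob s (K n) (P n)) \<sim>[sequentially] M
   \<and> (\<lambda>n. \<bar>edge_prob s (K n) (P n) - M n\<bar>) \<in> o(\<lambda>n. 1 / real n)"
proof
  show small: "(\<lambda>n. \<bar>edge_prob s (K n) (P n) - M n\<bar>) \<in> o(\<lambda>n. 1 / real n)"
  proof (rule smalloI_tendsto)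
    show "((\<lambda>n. \<bar>edge_prob s (K n) (P n) - M n\<bar> / (1 / real n)) \<longlongrightarrow> 0) sequentially"
      using scaled_diff_tendsto_zero by (simp add: mult.commute)
  qed (use eventually_gt_at_top[of 0] in \<open>auto elim: eventually_mono\<close>)
  have "(\<lambda>n. 1 / real n) \<in> O(M)"
  proof (rule bigoI)
    show "\<forall>\<^sub>F n in sequentially. norm (1 / real n) \<le> (1 / a) * norm (M n)"
      using main_term_bounds ln_ge_1 eventually_gt_at_top[of 0]
    proof eventually_elim
      case (elim n)
      have "a * 1 \<le> a * ln (real n)" using elim a_pos by (intro mult_left_mono) auto
      then have "a \<le> real n * M n" using elim by linarith
      then show ?case using elim a_pos M_nonneg[of n] by (simp add: field_simps)
    qed
  qed
  with small have "(\<lambda>n. edge_prob s (K n) (P n) - M n) \<in> o(M)"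
    by (simp add: landau_o.small_big_trans)
  then show "(\<lambda>n. edge_prob s (K n) (P n)) \<sim>[sequentially] M"
    by (rule smallo_imp_asymp_equiv)
qed

end

lemma main_term_bounds_if_edge_prob_bounds:
  fixes s :: nat and K P :: "nat \<Rightarrow> nat" and c0 :: real
  assumes "1 \<le> s" "\<forall>n. s \<le> K n \<and> K n \<le> P n" "0 < c0"
    and "\<forall>\<^sub>F n in sequentially. c0 * real n \<le> real (P n)"
    and "\<forall>\<^sub>F n in sequentially. ln (real n) / 2 \<le> real n * edge_prob s (K n) (P n)
                                 \<and> real n * edge_prob s (K n) (P n) \<le> 2 * ln (real n)"
  shows "\<forall>\<^sub>F n in sequentially. 1 / 4 * ln (real n) \<le> real n * main_term s (K n) (P n)
           \<and> real n * main_term s (K n) (P n) \<le> 4 * (real s ^ (2 * s) / fact s ^ 2) * ln (real n)"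
proof -
  define D :: real where "D = fact s ^ 2 / real s ^ (2 * s)"
  have D: "0 < D" unfolding D_def using assms by simp
  have "((\<lambda>n. 2 * (ln (real n) / real n)) \<longlongrightarrow> 0) sequentially"
    by (intro tendsto_mult_right_zero) real_asymp
  from order_tendstoD(2)[OF this, of "(1 / 16) ^ s / (2 * fact s)"]
  have "\<forall>\<^sub>F n in sequentially. 2 * (ln (real n) / real n) < (1 / 16) ^ s / (2 * fact s)" by simp
  moreover have "\<forall>\<^sub>F n in sequentially. max (16 * (real s + 1)^2) (2 * (real s * (real s - 1))) / c0 \<le> real n"
    by real_asymp
  ultimately show ?thesis
    using assms(4,5) eventually_gt_at_top[of 0]
  proof eventually_elim
    case (elim n)
    have KP: "s \<le> K n" "K n \<le> P n" "0 < P n" using assms(1) assms(2)[rule_format, of n] by auto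
    have "max (16 * (real s + 1)^2) (2 * (real s * (real s - 1))) \<le> c0 * real n"
      using elim assms(3) by (simp add: field_simps)
    then have P: "16 * (real s + 1)^2 \<le> real (P n)" "real s * (real s - 1) \<le> real (P n) / 2"
      using elim by auto
    have "edge_prob s (K n) (P n) \<le> 2 * (ln (real n) / real n)"
      using elim by (simp add: field_simps)
    then have "main_term s (K n) (P n) * D \<le> 2 * edge_prob s (K n) (P n)"
      unfolding D_def using elim KP P assms(1) by (intro main_term_le_edge_prob) auto
    then have "real n * (main_term s (K n) (P n) * D) \<le> real n * (2 * edge_prob s (K n) (P n))"
      by (rule mult_left_mono) simp
    also have "\<dots> \<le> 4 * ln (real n)"
      using elim by linarith
    finally have upper: "real n * main_term s (K n) (P n) \<le> 4 / D * ln (real n)"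
      using D by (simp add: field_simps)
    have "edge_prob s (K n) (P n) \<le> 2 * main_term s (K n) (P n)"
      using edge_prob_le_union_bound[OF KP(1,2)] union_bound_le_twice_main_term[OF _ KP(3) P(2)] KP
      by (meson order_trans le_trans)
    then have "real n * edge_prob s (K n) (P n) \<le> real n * (2 * main_term s (K n) (P n))"
      by (rule mult_left_mono) simp
    then have "ln (real n) / 2 \<le> real n * (2 * main_term s (K n) (P n))"
      using elim by linarith
    with upper show ?case unfolding D_def by simp
  qed
qed

theorem lemma8:
  fixes s :: nat and K P :: "nat \<Rightarrow> nat"
  assumes "s \<ge> 1"
    and "\<forall>n. s \<le> K n \<and> K n \<le> P n"
    and "(\<lambda>n. real (P n)) \<in> \<Omega>(\<lambda>n. real n)"
  shows "((\<exists>\<gamma> :: nat \<Rightarrow> real. \<gamma> \<in> O(\<lambda>n. ln (ln (real n))) \<and>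
             (\<forall>\<^sub>F n in sequentially. main_term s (K n) (P n) = (ln (real n) + \<gamma> n) / real n))
          \<longrightarrow> (\<lambda>n. edge_prob s (K n) (P n)) \<sim>[sequentially] (\<lambda>n. main_term s (K n) (P n))
              \<and> (\<lambda>n. \<bar>edge_prob s (K n) (P n) - main_term s (K n) (P n)\<bar>) \<in> o(\<lambda>n. 1 / real n))
       \<and> ((\<exists>\<gamma> :: nat \<Rightarrow> real. \<gamma> \<in> O(\<lambda>n. ln (ln (real n))) \<and>
             (\<forall>\<^sub>F n in sequentially. edge_prob s (K n) (P n) = (ln (real n) + \<gamma> n) / real n))
          \<longrightarrow> (\<lambda>n. edge_prob s (K n) (P n)) \<sim>[sequentially] (\<lambda>n. main_term s (K n) (P n))
              \<and> (\<lambda>n. \<bar>edge_prob s (K n) (P n) - main_term s (K n) (P n)\<bar>) \<in> o(\<lambda>n. 1 / real n))"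
proof -
  from assms(3) obtain c0 where c0: "0 < c0" "\<forall>\<^sub>F n in sequentially. c0 * real n \<le> real (P n)"
    by (elim landau_omega.bigE) simp
  have scaled: "\<forall>\<^sub>F n in sequentially. ln (real n) / 2 \<le> real n * f n \<and> real n * f n \<le> 2 * ln (real n)"
    if "\<gamma> \<in> O(\<lambda>n. ln (ln (real n)))" "\<forall>\<^sub>F n in sequentially. f n = (ln (real n) + \<gamma> n) / real n"
    for f \<gamma> :: "nat \<Rightarrow> real"
    using ln_add_bigo_ln_ln_bounds[OF that(1)] that(2) eventually_gt_at_top[of 0]
    by eventually_elim simp
  show ?thesis
  proof (rule conjI; rule impI; elim exE conjE)
    fix \<gamma> :: "nat \<Rightarrow> real"
    assume "\<gamma> \<in> O(\<lambda>n. ln (ln (real n)))"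
      and "\<forall>\<^sub>F n in sequentially. main_term s (K n) (P n) = (ln (real n) + \<gamma> n) / real n"
    from scaled[OF this] interpret connectivity_regime s K P "1 / 2" 2 c0
      using assms c0 by unfold_locales (auto elim: eventually_mono)
    show "(\<lambda>n. edge_prob s (K n) (P n)) \<sim>[sequentially] (\<lambda>n. main_term s (K n) (P n))
          \<and> (\<lambda>n. \<bar>edge_prob s (K n) (P n) - main_term s (K n) (P n)\<bar>) \<in> o(\<lambda>n. 1 / real n)"
      by (rule edge_prob_asymptotics)
  next
    fix \<gamma> :: "nat \<Rightarrow> real"
    assume "\<gamma> \<in> O(\<lambda>n. ln (ln (real n)))"
      and "\<forall>\<^sub>F n in sequentially. edge_prob s (K n) (P n) = (ln (real n) + \<gamma> n) / real n"
    from main_term_bounds_if_edge_prob_bounds[OF assms(1,2) c0 scaled[OF this]]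
    interpret connectivity_regime s K P "1 / 4" "4 * (real s ^ (2 * s) / fact s ^ 2)" c0
      using assms c0 by unfold_locales auto
    show "(\<lambda>n. edge_prob s (K n) (P n)) \<sim>[sequentially] (\<lambda>n. main_term s (K n) (P n))
          \<and> (\<lambda>n. \<bar>edge_prob s (K n) (P n) - main_term s (K n) (P n)\<bar>) \<in> o(\<lambda>n. 1 / real n)"
      by (rule edge_prob_asymptotics)
  qed
qed

end
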